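(* Assume $q>2$. For every integer $k\ge1$, in $K_\infty$: $$\zeta_C(q^k)\,\zeta_C(q^k-1)=\zeta_C(2q^k-1)+\zeta_C(q^k-1,q^k).$$
   Context: $A=\mathbb{F}_q[\theta]$, $A^+$ the monic polynomials, $K_\infty=\mathbb{F}_q((1/\theta))$. $\zeta_C(n)=\sum_{a\in A^+}a^{-n}$ and $\zeta_C(n_1,n_2)=\sum_{a_1,a_2\in A^+,\ \deg a_1>\deg a_2}a_1^{-n_1}a_2^{-n_2}$, for integers $n,n_1,n_2\ge1$. *)

theory Defs
  imports "HOL-Computational_Algebra.Polynomial" "HOL-Computational_Algebra.Formal_Laurent_Series" "HOL-Library.Cardinality"
begin

text \<open>F_q is modelled by a finite field type 'a with CARD('a) = q.
  A = 'a poly (variable theta).  K_infinity = F_q((1/theta)) is modelled by 'a fls,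
  the formal Laurent series in the variable X = 1/theta, with its library
  (1/theta)-adic metric (dist = 2^(-subdegree)).  Thus theta = fls_X_inv.\<close>

definition poly_to_Kinf :: "'a::field poly \<Rightarrow> 'a fls" where
  "poly_to_Kinf p = poly (map_poly fls_const p) fls_X_inv"

definition monic_deg :: "nat \<Rightarrow> 'a::field poly set" where
  "monic_deg d = {a. lead_coeff a = 1 \<and> degree a = d}"

definition monic_deg_less :: "nat \<Rightarrow> 'a::field poly set" where
  "monic_deg_less d = {a. lead_coeff a = 1 \<and> degree a < d}"

definition zetaC :: "nat \<Rightarrow> 'a::{finite,field} fls" where
  "zetaC n = (\<Sum>d. \<Sum>a\<in>monic_deg d. inverse (poly_to_Kinf a ^ n))"

definition zetaC2 :: "nat \<Rightarrow> nat \<Rightarrow> 'a::{finite,field} fls" where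
  "zetaC2 n1 n2 = (\<Sum>d. \<Sum>a1\<in>monic_deg d. inverse (poly_to_Kinf a1 ^ n1) *
      (\<Sum>a2\<in>monic_deg_less d. inverse (poly_to_Kinf a2 ^ n2)))"

end

theory Submission
  imports Defs
begin

text \<open>
  Write \<open>S\<^sub>d(n)\<close> for the sum of \<open>a^-n\<close> over the monic \<open>a\<close> of degree \<open>d\<close>, and
  \<open>s = q^k\<close>. Summed over \<open>d\<close>, the per-degree identity
  \<open>S\<^sub>d(s) (S\<^sub>d(s-1) + \<Sum>\<^sub>e\<^sub><\<^sub>d S\<^sub>e(s-1)) = S\<^sub>d(2s-1)\<close> is a triangular
  rearrangement of the product of the two zeta series; this is legitimate because \<open>S\<^sub>d(n)\<close> has
  \<open>(1/\<theta>)\<close>-adic valuation at least \<open>d\<close>.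

  For the per-degree identity, the diagonal \<open>a = b\<close> of \<open>S\<^sub>d(s) S\<^sub>d(s-1)\<close> gives \<open>S\<^sub>d(2s-1)\<close>.
  Off the diagonal, \<open>1/(ab) = (1/(a-b)) (1/b - 1/a)\<close> raised to the Frobenius power \<open>s\<close> yields
  \<open>a^-s b^-(s-1) = (a-b)^-s (b^-(s-1) - a^-(s-1)) + a^-s (a-b)^-(s-1)\<close>. As \<open>b\<close> varies,
  \<open>a - b\<close> runs through the nonzero \<open>c\<close> of degree \<open>< d\<close>. Here \<open>\<Sum> c^-s = (\<Sum> 1/c)^s = 0\<close>,
  as scaling by a constant \<open>\<noteq> 0, 1\<close> shows (this needs \<open>q > 2\<close>), whereas
  \<open>\<Sum> c^-(s-1) = (q - 1) \<Sum>\<^sub>e\<^sub><\<^sub>d S\<^sub>e(s-1) = -\<Sum>\<^sub>e\<^sub><\<^sub>d S\<^sub>e(s-1)\<close>, since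
  \<open>\<lambda>^(s-1) = 1\<close> for every nonzero constant \<open>\<lambda>\<close>.
\<close>

unbundle fps_syntax

section \<open>Finite fields and the Frobenius identity\<close>

lemma finite_field_power_card_minus_one:
  fixes x :: "'a::{finite,field}"
  assumes "x \<noteq> 0"
  shows "x ^ (CARD('a) - 1) = 1"
proof -
  let ?U = "UNIV - {0::'a}"
  have "bij_betw ((*) x) ?U ?U"
    by (rule bij_betwI[of _ _ _ "\<lambda>y. y / x"]) (use assms in auto)
  then have "(\<Prod>y\<in>?U. x * y) = \<Prod>?U"
    by (rule prod.reindex_bij_betw)
  moreover have "(\<Prod>y\<in>?U. x * y) = x ^ card ?U * \<Prod>?U"
    by (simp add: prod.distrib)
  moreover have "\<Prod>?U \<noteq> 0"
    by simp
  ultimately show ?thesis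
    by (simp add: card_Diff_singleton)
qed

lemma finite_field_power_card_power:
  fixes x :: "'a::{finite,field}"
  shows "x ^ (CARD('a) ^ k) = x"
proof (induction k)
  case (Suc k)
  have "x ^ CARD('a) = x"
    using finite_field_power_card_minus_one[of x] finite_UNIV_card_ge_0[where 'a='a]
    by (cases "x = 0") (simp_all add: power_eq_if)
  then show ?case
    by (simp add: power_mult Suc.IH flip: mult.commute[of "CARD('a)"])
qed simp

lemma finite_field_power_card_power_minus_one:
  fixes x :: "'a::{finite,field}"
  assumes "x \<noteq> 0"
  shows "x ^ (CARD('a) ^ k - 1) = 1"
proof -
  have "x ^ (CARD('a) ^ k - 1) * x = x ^ (CARD('a) ^ k)"
    by (rule power_minus_mult) simp
  then have "x ^ (CARD('a) ^ k - 1) * x = 1 * x"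
    by (simp add: finite_field_power_card_power)
  then show ?thesis
    using assms by simp
qed

text \<open>The polynomials \<open>(X + 1)^q\<close> and \<open>X^q + 1\<close> of degree \<open>q\<close> agree at all \<open>q\<close> points of the field,
  so they coincide; comparing coefficients kills the inner binomial coefficients.\<close>
lemma finite_field_binomial_card_eq_0:
  assumes "0 < j" "j < CARD('a::{finite,field})"
  shows "of_nat (CARD('a) choose j) = (0::'a)"
proof -
  define q where "q = CARD('a)"
  have "[:1,1:] ^ q = monom (1::'a) q + 1"
  proof (rule poly_eqI_degree_lead_coeff[where n=q and A=UNIV])
    show "coeff ([:1, 1:] ^ q) q = coeff (monom (1::'a) q + 1) q"
      using assms by (simp add: coeff_linear_power q_def)
    show "degree ([:1::'a, 1:] ^ q) \<le> q"
      using degree_power_le[of "[:1::'a,1:]" q] by simp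
    show "degree (monom (1::'a) q + 1) \<le> q"
      by (rule degree_add_le) (simp_all add: degree_monom_eq)
    show "poly ([:1, 1:] ^ q) z = poly (monom 1 q + 1) z" for z :: 'a
      using finite_field_power_card_power[of z 1] finite_field_power_card_power[of "1 + z" 1]
      by (simp add: poly_monom q_def add.commute)
  qed (simp add: q_def)
  then have "coeff ([:1,1:] ^ q) j = coeff (monom (1::'a) q + 1) j"
    by simp
  then show ?thesis
    using assms by (simp add: coeff_linear_poly_power coeff_monom q_def)
qed

lemma fls_of_nat_card_eq_0: "of_nat CARD('a::{finite,field}) = (0 :: 'a fls)"
proof -
  have "card {0::'a, 1} \<le> CARD('a)"
    by (intro card_mono) auto
  then show ?thesis
    using finite_field_binomial_card_eq_0[of 1, where 'a='a] by (simp add: fls_of_nat)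
qed

lemma add_power_eq_if_binomial_eq_0:
  fixes x y :: "'b::comm_semiring_1"
  assumes "0 < n" and binomial: "\<And>j. 0 < j \<Longrightarrow> j < n \<Longrightarrow> of_nat (n choose j) = (0::'b)"
  shows "(x + y) ^ n = x ^ n + y ^ n"
proof -
  have "(x + y) ^ n = (\<Sum>j\<le>n. of_nat (n choose j) * x ^ j * y ^ (n - j))"
    by (rule binomial_ring)
  also have "\<dots> = (\<Sum>j\<in>{0,n}. of_nat (n choose j) * x ^ j * y ^ (n - j))"
    by (rule sum.mono_neutral_right) (auto simp: binomial)
  finally show ?thesis
    using \<open>0 < n\<close> by (simp add: add.commute)
qed

lemma fls_add_power_card_power:
  fixes x y :: "'a::{finite,field} fls"
  shows "(x + y) ^ (CARD('a) ^ k) = x ^ (CARD('a) ^ k) + y ^ (CARD('a) ^ k)"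
proof (induction k)
  case (Suc k)
  have "of_nat (CARD('a) choose j) = (0::'a fls)" if "0 < j" "j < CARD('a)" for j
    using finite_field_binomial_card_eq_0[OF that] by (simp add: fls_of_nat)
  then have frobenius: "(u + v) ^ CARD('a) = u ^ CARD('a) + v ^ CARD('a)" for u v :: "'a fls"
    by (intro add_power_eq_if_binomial_eq_0) simp_all
  have "(x + y) ^ (CARD('a) ^ Suc k) = ((x + y) ^ (CARD('a) ^ k)) ^ CARD('a)"
    by (simp only: power_Suc2 power_mult)
  also have "\<dots> = (x ^ (CARD('a) ^ k)) ^ CARD('a) + (y ^ (CARD('a) ^ k)) ^ CARD('a)"
    by (simp only: Suc.IH frobenius)
  finally show ?case
    by (simp only: power_Suc2 power_mult)
qed simp

lemma fls_diff_power_card_power: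
  fixes x y :: "'a::{finite,field} fls"
  shows "(x - y) ^ (CARD('a) ^ k) = x ^ (CARD('a) ^ k) - y ^ (CARD('a) ^ k)"
  using fls_add_power_card_power[of "x - y" y k] by (simp add: algebra_simps)

lemma fls_sum_power_card_power:
  fixes f :: "'b \<Rightarrow> 'a::{finite,field} fls"
  shows "sum f A ^ (CARD('a) ^ k) = (\<Sum>i\<in>A. f i ^ (CARD('a) ^ k))"
  by (induction A rule: infinite_finite_induct) (auto simp: fls_add_power_card_power power_0_left)

lemma inverse_power_partial_fraction:
  fixes x y :: "'b::field"
  assumes "x \<noteq> 0" "y \<noteq> 0" "x \<noteq> y" "0 < s"
    and frobenius: "(inverse y - inverse x) ^ s = inverse y ^ s - inverse x ^ s"
  shows "inverse x ^ s * inverse y ^ (s - 1)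
       = inverse (x - y) ^ s * (inverse y ^ (s - 1) - inverse x ^ (s - 1))
         + inverse x ^ s * inverse (x - y) ^ (s - 1)"
proof -
  define u v w where "u = inverse x" and "v = inverse y" and "w = inverse (x - y)"
  have lower: "z * inverse z ^ s = inverse z ^ (s - 1)" if "z \<noteq> 0" for z :: 'b
    using that \<open>0 < s\<close> by (simp add: power_eq_if)
  have "u * v = w * (v - u)"
    using assms by (simp add: u_def v_def w_def field_simps)
  then have product: "u ^ s * v ^ s = w ^ s * v ^ s - w ^ s * u ^ s"
    by (metis frobenius power_mult_distrib right_diff_distrib u_def v_def)
  have "u ^ s * (y * v ^ s) = y * (u ^ s * v ^ s)"
    by (simp add: algebra_simps)
  also have "\<dots> = w ^ s * (y * v ^ s) - w ^ s * (x * u ^ s) + u ^ s * ((x - y) * w ^ s)"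
    unfolding product by (simp add: algebra_simps)
  finally show ?thesis
    using assms unfolding u_def v_def w_def by (simp add: lower right_diff_distrib)
qed

lemma sum_sum_remove_swap:
  assumes "finite N"
  shows "(\<Sum>a\<in>N. \<Sum>b\<in>N - {a}. f a b) = (\<Sum>b\<in>N. \<Sum>a\<in>N - {b}. f a b)"
proof -
  have "\<And>a. N - {a} = {b. b \<in> N \<and> a \<noteq> b}" "\<And>b. N - {b} = {a. a \<in> N \<and> a \<noteq> b}"
    by auto
  then show ?thesis
    using sum.swap_restrict[OF assms assms, of f "\<lambda>a b. a \<noteq> b"] by simp
qed

section \<open>The embedding of \<open>A\<close> into \<open>K\<^sub>\<infinity>\<close>\<close>

lemma poly_to_Kinf_nth:
  "poly_to_Kinf (p :: 'a::field poly) $$ m = (if m \<le> 0 then coeff p (nat (-m)) else 0)"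
proof (induction p arbitrary: m)
  case (pCons a p)
  have "poly_to_Kinf (pCons a p) = fls_const a + fls_shift 1 (poly_to_Kinf p)"
    by (simp add: poly_to_Kinf_def map_poly_pCons fls_X_inv_times_conv_shift)
  moreover have "nat (-m) = Suc (nat (-(m+1)))" if "m < 0"
    using that by simp
  ultimately show ?case
    by (cases m "0::int" rule: linorder_cases) (simp_all add: pCons.IH)
qed (simp add: poly_to_Kinf_def)

lemma poly_to_Kinf_diff: "poly_to_Kinf (p - q) = poly_to_Kinf p - poly_to_Kinf (q :: 'a::field poly)"
  by (rule fls_eqI) (simp add: poly_to_Kinf_nth)

lemma poly_to_Kinf_smult: "poly_to_Kinf (smult c p) = fls_const c * poly_to_Kinf (p :: 'a::field poly)"
  by (rule fls_eqI) (simp add: poly_to_Kinf_nth)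

lemma poly_to_Kinf_eq_iff [simp]: "poly_to_Kinf p = poly_to_Kinf q \<longleftrightarrow> p = (q :: 'a::field poly)"
proof
  assume "poly_to_Kinf p = poly_to_Kinf q"
  then have "poly_to_Kinf p $$ (- int n) = poly_to_Kinf q $$ (- int n)" for n
    by simp
  then show "p = q"
    by (intro poly_eqI) (simp add: poly_to_Kinf_nth)
qed simp

lemma poly_to_Kinf_eq_0_iff [simp]: "poly_to_Kinf p = 0 \<longleftrightarrow> p = (0 :: 'a::field poly)"
  using poly_to_Kinf_eq_iff[of p 0] by (simp add: poly_to_Kinf_def)

lemma fls_subdegree_poly_to_Kinf:
  "fls_subdegree (poly_to_Kinf (p :: 'a::field poly)) = - int (degree p)"
proof (cases "p = 0")
  case False
  show ?thesis
  proof (rule fls_subdegree_eqI)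
    show "poly_to_Kinf p $$ (- int (degree p)) \<noteq> 0"
      using False by (simp add: poly_to_Kinf_nth)
    show "poly_to_Kinf p $$ k = 0" if "k < - int (degree p)" for k
      using that by (simp add: poly_to_Kinf_nth coeff_eq_0)
  qed
qed (simp add: poly_to_Kinf_def)

section \<open>\<open>(1/\<theta>)\<close>-adic convergence\<close>

text \<open>\<open>x\<close> has \<open>(1/\<theta>)\<close>-adic valuation at least \<open>M\<close>; unlike a bound on
  \<open>fls_subdegree\<close>, this also holds for \<open>x = 0\<close>.\<close>
definition vanishes_below :: "int \<Rightarrow> 'a::zero fls \<Rightarrow> bool" where
  "vanishes_below M x \<longleftrightarrow> (\<forall>m<M. x $$ m = 0)"

lemma vanishes_below_iff: "vanishes_below M x \<longleftrightarrow> x = 0 \<or> M \<le> fls_subdegree x"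
  unfolding vanishes_below_def
  by (metis fls_eq0_below_subdegree fls_subdegree_geI fls_zero_nth nth_fls_subdegree_nonzero
      not_le order.strict_trans2)

lemma vanishes_below_mono: "vanishes_below M x \<Longrightarrow> N \<le> M \<Longrightarrow> vanishes_below N x"
  unfolding vanishes_below_def by auto

lemma vanishes_below_add:
  "vanishes_below M x \<Longrightarrow> vanishes_below M y \<Longrightarrow> vanishes_below M (x + (y :: 'a::monoid_add fls))"
  unfolding vanishes_below_def by auto

lemma vanishes_below_diff:
  "vanishes_below M x \<Longrightarrow> vanishes_below M y \<Longrightarrow> vanishes_below M (x - (y :: 'a::group_add fls))"
  unfolding vanishes_below_def by auto

lemma vanishes_below_sum:
  "(\<And>i. i \<in> A \<Longrightarrow> vanishes_below M (f i))
    \<Longrightarrow> vanishes_below M (sum f A :: 'a::comm_monoid_add fls)"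
  by (induction A rule: infinite_finite_induct) (auto simp: vanishes_below_def)

lemma vanishes_below_mult:
  "vanishes_below M x \<Longrightarrow> vanishes_below N y
    \<Longrightarrow> vanishes_below (M + N) (x * (y :: 'a::field fls))"
  by (cases "x = 0 \<or> y = 0") (auto simp: vanishes_below_iff)

lemma vanishes_below_inverse_poly_to_Kinf_power:
  "vanishes_below (int n * int (degree p)) (inverse (poly_to_Kinf (p :: 'a::field poly) ^ n))"
  by (simp add: vanishes_below_iff fls_subdegree_pow fls_subdegree_poly_to_Kinf)

lemma fls_eq_if_vanishes_below:
  fixes x y :: "'a::group_add fls"
  assumes "\<And>N. vanishes_below (int N) (x - y)"
  shows "x = y"
proof (rule fls_eqI)
  show "x $$ m = y $$ m" for m
    using assms[of "nat (m + 1)"] by (simp add: vanishes_below_def)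
qed

lemma dist_fls_le_if_vanishes_below:
  fixes x y :: "'a::group_add fls"
  assumes "vanishes_below (int N) (x - y)"
  shows "dist x y \<le> (1/2) ^ N"
proof (cases "x = y")
  case False
  then have "int N \<le> fls_subdegree (x - y)"
    using assms by (simp add: vanishes_below_iff)
  then have "inverse ((2::real) ^ nat (fls_subdegree (x - y))) \<le> inverse (2 ^ N)"
    by (intro le_imp_inverse_le power_increasing) auto
  then show ?thesis
    using False \<open>int N \<le> _\<close> by (simp add: dist_fls_def power_one_over inverse_eq_divide)
qed simp

lemma LIMSEQ_fls_if_vanishes_below:
  fixes u :: "nat \<Rightarrow> 'a::group_add fls"
  assumes "\<And>N. eventually (\<lambda>n. vanishes_below (int N) (u n - L)) sequentially"
  shows "u \<longlonglongrightarrow> L"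
proof (rule metric_LIMSEQ_I)
  fix r :: real
  assume "0 < r"
  then obtain N :: nat where N: "(1/2) ^ N < r"
    using real_arch_pow_inv[of r "1/2"] by auto
  from assms[of N] obtain n0 where "\<forall>n\<ge>n0. vanishes_below (int N) (u n - L)"
    by (auto simp: eventually_sequentially)
  then have "\<forall>n\<ge>n0. dist (u n) L < r"
    using dist_fls_le_if_vanishes_below N by (meson order.strict_trans1)
  then show "\<exists>n0. \<forall>n\<ge>n0. dist (u n) L < r" ..
qed

lemma fls_sum_nth: "sum f A $$ m = (\<Sum>i\<in>A. f i $$ m)"
  by (induction A rule: infinite_finite_induct) auto

text \<open>The \<open>m\<close>-th coefficient of the partial sums is constant from the \<open>(m+1)\<close>-st on; these
  stable coefficients define the limit.\<close>
lemma fls_sums_if_vanishes_below: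
  fixes f :: "nat \<Rightarrow> 'a::ab_group_add fls"
  assumes vanish: "\<And>d. vanishes_below (int d) (f d)"
  obtains L where "f sums L" and "\<And>N. vanishes_below (int N) (L - (\<Sum>d<N. f d))"
proof -
  define L where "L = fps_to_fls (Abs_fps (\<lambda>n. (\<Sum>d\<le>n. f d) $$ int n))"
  have stable: "(\<Sum>d<N. f d) $$ m = L $$ m" if "m < int N" for N m
  proof (cases "m < 0")
    case True
    then show ?thesis
      using vanish by (simp add: L_def fls_sum_nth vanishes_below_def)
  next
    case False
    have "f d $$ m = 0" if "nat m < d" for d
      using vanish[of d] False that by (simp add: vanishes_below_def)
    then have "(\<Sum>d<N. f d $$ m) = (\<Sum>d\<le>nat m. f d $$ m)"
      using False that by (intro sum.mono_neutral_right) (auto simp: not_le)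
    then show ?thesis
      using False by (simp add: L_def fls_sum_nth)
  qed
  then have tail: "vanishes_below (int N) (L - (\<Sum>d<N. f d))" for N
    by (simp add: vanishes_below_def)
  have "(\<lambda>N. \<Sum>d<N. f d) \<longlonglongrightarrow> L"
  proof (rule LIMSEQ_fls_if_vanishes_below)
    show "eventually (\<lambda>n. vanishes_below (int N) ((\<Sum>d<n. f d) - L)) sequentially" for N
      using stable by (auto simp: eventually_sequentially vanishes_below_def intro!: exI[of _ N])
  qed
  then show ?thesis
    using that tail by (simp add: sums_def)
qed

lemma vanishes_below_suminf_fls:
  fixes f :: "nat \<Rightarrow> 'a::ab_group_add fls"
  assumes "\<And>d. vanishes_below (int d) (f d)"
  shows "vanishes_below 0 (suminf f)" and "vanishes_below (int N) (suminf f - (\<Sum>d<N. f d))"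
  using fls_sums_if_vanishes_below[OF assms] sums_unique
  by (metis diff_zero lessThan_0 sum.empty of_nat_0)+

lemma vanishes_below_suminf_mult_fls:
  fixes f g :: "nat \<Rightarrow> 'a::field fls"
  assumes f: "\<And>d. vanishes_below (int d) (f d)" and g: "\<And>d. vanishes_below (int d) (g d)"
  shows "vanishes_below (int N) (suminf f * suminf g - (\<Sum>d<N. f d) * (\<Sum>d<N. g d))"
proof -
  define F where "F = (\<Sum>d<N. f d)"
  define G where "G = (\<Sum>d<N. g d)"
  have "suminf f * suminf g - F * G = (suminf f - F) * suminf g + F * (suminf g - G)"
    by (simp add: algebra_simps)
  moreover have "vanishes_below 0 F"
    unfolding F_def by (intro vanishes_below_sum vanishes_below_mono[OF f]) simp
  ultimately show ?thesis
    using vanishes_below_mult vanishes_below_suminf_fls[OF f] vanishes_below_suminf_fls[OF g]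
    by (metis F_def G_def add_0 add.right_neutral vanishes_below_add)
qed

section \<open>Sums over polynomials of bounded degree\<close>

lemma finite_degree_less: "finite {p :: 'a::{finite,zero} poly. degree p < n}"
proof -
  have "{p :: 'a poly. degree p < n} \<subseteq> Poly ` {xs. length xs = n}"
  proof
    fix p :: "'a poly"
    assume "p \<in> {p. degree p < n}"
    then have "p = Poly (map (coeff p) [0..<n])"
      by (intro poly_eqI) (auto simp: nth_default_def coeff_eq_0)
    then show "p \<in> Poly ` {xs. length xs = n}"
      by (intro image_eqI) auto
  qed
  moreover have "finite {xs :: 'a list. length xs = n}"
    using finite_lists_length_eq[of "UNIV :: 'a set" n] by simp
  ultimately show ?thesis
    by (meson finite_imageI finite_subset)
qed

lemma finite_monic_deg: "finite (monic_deg d :: 'a::{finite,field} poly set)"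
  by (rule finite_subset[OF _ finite_degree_less[of "Suc d"]]) (auto simp: monic_deg_def)

lemma sum_monic_deg_less:
  "(\<Sum>m\<in>monic_deg_less d. f m) = (\<Sum>e<d. \<Sum>m\<in>monic_deg e. f m)"
  for f :: "'a::{finite,field} poly \<Rightarrow> 'b::comm_monoid_add"
proof -
  have by_degree: "monic_deg_less d = (\<Union>e<d. monic_deg e)"
    by (auto simp: monic_deg_less_def monic_deg_def)
  show ?thesis
    unfolding by_degree
    by (rule sum.UNION_disjoint) (auto simp: finite_monic_deg, auto simp: monic_deg_def)
qed

definition nonzero_deg_less :: "nat \<Rightarrow> 'a::zero poly set" where
  "nonzero_deg_less d = {c. degree c < d \<and> c \<noteq> 0}"

lemma monic_deg_diff_in_nonzero_deg_less:
  assumes "a \<in> monic_deg d" "b \<in> monic_deg d" "a \<noteq> b"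
  shows "a - b \<in> nonzero_deg_less d"
proof -
  have "coeff (a - b) k = 0" if "d \<le> k" for k
    using assms that by (cases "k = d") (auto simp: monic_deg_def coeff_eq_0)
  then have "degree (a - b) < d"
    using assms by (intro degree_lessI) auto
  then show ?thesis
    using assms by (simp add: nonzero_deg_less_def)
qed

lemma monic_deg_add_degree_less:
  assumes "a \<in> monic_deg d" "degree c < d"
  shows "a + c \<in> monic_deg d"
proof -
  have "degree (a + c) = d"
    using assms by (simp add: monic_deg_def degree_add_eq_left)
  then show ?thesis
    using assms by (auto simp: monic_deg_def coeff_eq_0)
qed

lemma sum_monic_deg_remove_diff:
  assumes "a \<in> monic_deg d"
  shows "(\<Sum>b\<in>monic_deg d - {a}. g (a - b)) = (\<Sum>c\<in>nonzero_deg_less d. g c)"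
  by (rule sum.reindex_bij_witness[where i="\<lambda>c. a - c" and j="\<lambda>b. a - b"])
     (use assms monic_deg_diff_in_nonzero_deg_less monic_deg_add_degree_less[of a d "- _"] in
       \<open>auto simp: nonzero_deg_less_def\<close>)

lemma sum_monic_deg_remove_diff':
  assumes "a \<in> monic_deg d"
  shows "(\<Sum>b\<in>monic_deg d - {a}. g (b - a)) = (\<Sum>c\<in>nonzero_deg_less d. g c)"
  by (rule sum.reindex_bij_witness[where i="\<lambda>c. a + c" and j="\<lambda>b. b - a"])
     (use assms monic_deg_diff_in_nonzero_deg_less monic_deg_add_degree_less in
       \<open>auto simp: nonzero_deg_less_def\<close>)

text \<open>Scaling by a constant \<open>\<lambda> \<noteq> 0, 1\<close> permutes the nonzero polynomials of degree \<open>< d\<close> and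
  multiplies the sum by \<open>1/\<lambda> \<noteq> 1\<close>; this is where \<open>q > 2\<close> is needed.\<close>
lemma sum_inverse_nonzero_deg_less_eq_0:
  assumes "CARD('a::{finite,field}) > 2"
  shows "(\<Sum>c\<in>nonzero_deg_less d. inverse (poly_to_Kinf c)) = (0 :: 'a fls)"
proof -
  have "\<exists>l::'a. l \<noteq> 0 \<and> l \<noteq> 1"
  proof (rule ccontr)
    assume "\<nexists>l::'a. l \<noteq> 0 \<and> l \<noteq> 1"
    then have "CARD('a) \<le> card {0::'a, 1}"
      by (intro card_mono) auto
    then show False
      using assms by simp
  qed
  then obtain l :: 'a where l: "l \<noteq> 0" "l \<noteq> 1"
    by blast
  define S :: "'a fls" where "S = (\<Sum>c\<in>nonzero_deg_less d. inverse (poly_to_Kinf c))"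
  have "S = (\<Sum>c\<in>nonzero_deg_less d. inverse (poly_to_Kinf (smult l c)))"
    unfolding S_def
    by (rule sum.reindex_bij_witness[where i="smult l" and j="smult (inverse l)"])
       (use l in \<open>auto simp: nonzero_deg_less_def\<close>)
  also have "\<dots> = fls_const (inverse l) * S"
    by (simp add: S_def poly_to_Kinf_smult sum_distrib_left fls_inverse_const)
  finally have "(1 - fls_const (inverse l)) * S = 0"
    by (simp add: algebra_simps)
  moreover have "fls_const (inverse l) \<noteq> 1"
  proof
    assume "fls_const (inverse l) = 1"
    then have "fls_const (inverse l) $$ 0 = (1 :: 'a fls) $$ 0"
      by simp
    then show False
      using l by simp
  qed
  ultimately show ?thesis
    by (simp add: S_def)
qed

lemma sum_nonzero_deg_less_by_lead_coeff:
  "(\<Sum>c\<in>nonzero_deg_less d. g c) = (\<Sum>l\<in>- {0::'a::field}. \<Sum>m\<in>monic_deg_less d. g (smult l m))"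
proof -
  have "(\<Sum>c\<in>nonzero_deg_less d. g c) = (\<Sum>(l, m)\<in>(- {0}) \<times> monic_deg_less d. g (smult l m))"
    by (rule sum.reindex_bij_witness[where i="\<lambda>(l, m). smult l m"
          and j="\<lambda>c. (lead_coeff c, smult (inverse (lead_coeff c)) c)"])
       (auto simp: nonzero_deg_less_def monic_deg_less_def lead_coeff_smult)
  then show ?thesis
    by (simp add: sum.cartesian_product)
qed

text \<open>Each of the \<open>q - 1 = -1\<close> leading coefficients contributes the same sum, since
  \<open>\<lambda>^(q^k - 1) = 1\<close>.\<close>
lemma sum_inverse_power_nonzero_deg_less:
  assumes "k \<ge> 1"
  defines "n \<equiv> CARD('a::{finite,field}) ^ k - 1"
  shows "(\<Sum>c\<in>nonzero_deg_less d. inverse (poly_to_Kinf c ^ n))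
       = - (\<Sum>m\<in>monic_deg_less d. inverse (poly_to_Kinf m ^ n) :: 'a fls)"
proof -
  have scale: "poly_to_Kinf (smult l m) ^ n = poly_to_Kinf m ^ n" if "l \<noteq> 0" for l :: 'a and m
    using finite_field_power_card_power_minus_one[OF that, of k]
    by (simp add: n_def poly_to_Kinf_smult power_mult_distrib flip: fls_const_power)
  have "(\<Sum>c\<in>nonzero_deg_less d. inverse (poly_to_Kinf c ^ n) :: 'a fls)
      = (\<Sum>l\<in>- {0::'a}. \<Sum>m\<in>monic_deg_less d. inverse (poly_to_Kinf m ^ n))"
    unfolding sum_nonzero_deg_less_by_lead_coeff
    by (rule sum.cong[OF refl], rule sum.cong[OF refl]) (simp add: scale)
  also have "\<dots> = of_nat (card (- {0::'a})) * (\<Sum>m\<in>monic_deg_less d. inverse (poly_to_Kinf m ^ n))"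
    by simp
  also have "of_nat (card (- {0::'a})) = (of_nat CARD('a) - 1 :: 'a fls)"
    by (simp add: Compl_eq_Diff_UNIV card_Diff_singleton of_nat_diff)
  finally show ?thesis
    by (simp add: fls_of_nat_card_eq_0)
qed

lemma sum_inverse_power_card_nonzero_deg_less_eq_0:
  assumes "CARD('a::{finite,field}) > 2"
  shows "(\<Sum>c\<in>nonzero_deg_less d. inverse (poly_to_Kinf c) ^ (CARD('a) ^ k)) = (0 :: 'a fls)"
  using sum_inverse_nonzero_deg_less_eq_0[OF assms, of d]
  by (simp add: zero_power flip: fls_sum_power_card_power)

section \<open>Power sums over monic polynomials of fixed degree\<close>

definition monic_power_sum :: "nat \<Rightarrow> nat \<Rightarrow> 'a::{finite,field} fls" where
  "monic_power_sum n d = (\<Sum>a\<in>monic_deg d. inverse (poly_to_Kinf a ^ n))"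

text \<open>Expanding \<open>a^-s b^-(s-1)\<close> by partial fractions in \<open>a - b\<close>, two of the three resulting
  double sums contain the vanishing factor \<open>\<Sum>\<^sub>c c^-s\<close>.\<close>
lemma sum_off_diagonal_monic_deg:
  fixes d k :: nat
  assumes q: "CARD('a::{finite,field}) > 2" and k: "k \<ge> 1"
  defines "s \<equiv> CARD('a) ^ k"
  shows "(\<Sum>a\<in>monic_deg d. \<Sum>b\<in>monic_deg d - {a}.
            inverse (poly_to_Kinf a) ^ s * inverse (poly_to_Kinf b) ^ (s - 1))
       = - monic_power_sum s d * (\<Sum>m\<in>monic_deg_less d. inverse (poly_to_Kinf m ^ (s - 1)) :: 'a fls)"
proof -
  define N where "N = (monic_deg d :: 'a poly set)"
  define u where "u p = inverse (poly_to_Kinf p)" for p :: "'a poly"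
  have finite_N: "finite N"
    by (simp add: N_def finite_monic_deg)
  have vanish: "(\<Sum>c\<in>nonzero_deg_less d. u c ^ s) = 0"
    unfolding u_def s_def by (rule sum_inverse_power_card_nonzero_deg_less_eq_0[OF q])
  have partial_fraction: "u a ^ s * u b ^ (s - 1)
      = u (a - b) ^ s * u b ^ (s - 1) - u a ^ (s - 1) * u (a - b) ^ s + u a ^ s * u (a - b) ^ (s - 1)"
    if "a \<in> N" "b \<in> N - {a}" for a b
  proof -
    have "a \<noteq> 0" "b \<noteq> 0" "a \<noteq> b"
      using that by (auto simp: N_def monic_deg_def)
    then show ?thesis
      using inverse_power_partial_fraction[of "poly_to_Kinf a" "poly_to_Kinf b" s]
      by (simp add: u_def poly_to_Kinf_diff s_def fls_diff_power_card_power algebra_simps)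
  qed
  have "(\<Sum>a\<in>N. \<Sum>b\<in>N - {a}. u a ^ s * u b ^ (s - 1))
      = (\<Sum>a\<in>N. \<Sum>b\<in>N - {a}.
          u (a - b) ^ s * u b ^ (s - 1) - u a ^ (s - 1) * u (a - b) ^ s + u a ^ s * u (a - b) ^ (s - 1))"
    by (intro sum.cong refl) (rule partial_fraction)
  also have "\<dots> = (\<Sum>a\<in>N. \<Sum>b\<in>N - {a}. u (a - b) ^ s * u b ^ (s - 1))
        - (\<Sum>a\<in>N. \<Sum>b\<in>N - {a}. u a ^ (s - 1) * u (a - b) ^ s)
        + (\<Sum>a\<in>N. \<Sum>b\<in>N - {a}. u a ^ s * u (a - b) ^ (s - 1))"
    by (simp only: sum.distrib sum_subtractf)
  also have "(\<Sum>a\<in>N. \<Sum>b\<in>N - {a}. u (a - b) ^ s * u b ^ (s - 1))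
      = (\<Sum>b\<in>N. (\<Sum>a\<in>N - {b}. u (a - b) ^ s) * u b ^ (s - 1))"
    unfolding sum_distrib_right by (rule sum_sum_remove_swap[OF finite_N])
  also have "\<dots> = 0"
    using sum_monic_deg_remove_diff'[of _ d "\<lambda>c. u c ^ s"] vanish
    by (intro sum.neutral ballI) (simp add: N_def)
  also have "(\<Sum>a\<in>N. \<Sum>b\<in>N - {a}. u a ^ (s - 1) * u (a - b) ^ s)
      = (\<Sum>a\<in>N. u a ^ (s - 1) * (\<Sum>b\<in>N - {a}. u (a - b) ^ s))"
    by (simp only: sum_distrib_left)
  also have "\<dots> = 0"
    using sum_monic_deg_remove_diff[of _ d "\<lambda>c. u c ^ s"] vanish
    by (intro sum.neutral ballI) (simp add: N_def)
  also have "(\<Sum>a\<in>N. \<Sum>b\<in>N - {a}. u a ^ s * u (a - b) ^ (s - 1))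
      = (\<Sum>a\<in>N. u a ^ s * (\<Sum>b\<in>N - {a}. u (a - b) ^ (s - 1)))"
    by (simp only: sum_distrib_left)
  also have "\<dots> = (\<Sum>a\<in>N. u a ^ s * (\<Sum>c\<in>nonzero_deg_less d. u c ^ (s - 1)))"
    using sum_monic_deg_remove_diff[of _ d "\<lambda>c. u c ^ (s - 1)"]
    by (intro sum.cong refl) (simp add: N_def)
  finally show ?thesis
    using sum_inverse_power_nonzero_deg_less[where 'a='a, OF k, of d]
    by (simp add: N_def u_def s_def monic_power_sum_def power_inverse flip: sum_distrib_right)
qed

lemma monic_power_sum_mult_eq:
  fixes d k :: nat
  assumes q: "CARD('a::{finite,field}) > 2" and k: "k \<ge> 1"
  defines "s \<equiv> CARD('a) ^ k"
  shows "monic_power_sum s d * (monic_power_sum (s - 1) d + (\<Sum>e<d. monic_power_sum (s - 1) e))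
       = (monic_power_sum (2 * s - 1) d :: 'a fls)"
proof -
  define N where "N = (monic_deg d :: 'a poly set)"
  define u where "u p = inverse (poly_to_Kinf p)" for p :: "'a poly"
  have "0 < s"
    by (simp add: s_def)
  then have diagonal: "u a ^ s * u a ^ (s - 1) = u a ^ (2 * s - 1)" for a
    by (simp add: mult_2 flip: power_add)
  have "monic_power_sum s d * monic_power_sum (s - 1) d = (\<Sum>a\<in>N. \<Sum>b\<in>N. u a ^ s * u b ^ (s - 1))"
    by (simp add: monic_power_sum_def N_def u_def power_inverse sum_product)
  also have "\<dots> = (\<Sum>a\<in>N. u a ^ (2 * s - 1) + (\<Sum>b\<in>N - {a}. u a ^ s * u b ^ (s - 1)))"
    by (intro sum.cong refl) (simp only: N_def sum.remove[OF finite_monic_deg] diagonal)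
  also have "\<dots> = monic_power_sum (2 * s - 1) d
      - monic_power_sum s d * (\<Sum>m\<in>monic_deg_less d. inverse (poly_to_Kinf m ^ (s - 1)))"
    using sum_off_diagonal_monic_deg[OF q k, of d]
    by (simp add: sum.distrib monic_power_sum_def N_def u_def power_inverse s_def)
  finally show ?thesis
    by (simp add: sum_monic_deg_less monic_power_sum_def algebra_simps)
qed

lemma vanishes_below_monic_power_sum:
  assumes "n \<ge> 1"
  shows "vanishes_below (int d) (monic_power_sum n d)"
  unfolding monic_power_sum_def
proof (rule vanishes_below_sum)
  fix a :: "'a poly"
  assume "a \<in> monic_deg d"
  moreover have "int d \<le> int n * int d"
    using assms mult_le_mono1[of 1 n d] by (simp flip: of_nat_mult)
  ultimately show "vanishes_below (int d) (inverse (poly_to_Kinf a ^ n))"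
    using vanishes_below_inverse_poly_to_Kinf_power[of n a]
    by (auto simp: monic_deg_def intro: vanishes_below_mono)
qed

lemma zetaC_eq_suminf: "zetaC n = (\<Sum>d. monic_power_sum n d)"
  by (simp add: zetaC_def monic_power_sum_def)

lemma zetaC2_eq_suminf:
  "zetaC2 n1 n2 = (\<Sum>d. monic_power_sum n1 d * (\<Sum>e<d. monic_power_sum n2 e))"
  by (simp add: zetaC2_def monic_power_sum_def sum_monic_deg_less sum_distrib_right)

lemma sum_mult_sum_lessThan_eq:
  fixes X Y Z :: "nat \<Rightarrow> 'b::comm_ring"
  assumes "\<And>d. X d * (Y d + (\<Sum>e<d. Y e)) = Z d"
  shows "(\<Sum>d<N. X d) * (\<Sum>d<N. Y d) = (\<Sum>d<N. Z d) + (\<Sum>d<N. Y d * (\<Sum>e<d. X e))"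
proof (induction N)
  case (Suc N)
  have "(\<Sum>d<Suc N. X d) * (\<Sum>d<Suc N. Y d)
      = (\<Sum>d<N. X d) * (\<Sum>d<N. Y d) + X N * (Y N + (\<Sum>e<N. Y e)) + Y N * (\<Sum>e<N. X e)"
    by (simp add: algebra_simps)
  then show ?case
    by (simp add: Suc.IH assms)
qed simp

lemma suminf_mult_suminf_fls_eq:
  fixes X Y Z :: "nat \<Rightarrow> 'a::field fls"
  assumes X: "\<And>d. vanishes_below (int d) (X d)" and Y: "\<And>d. vanishes_below (int d) (Y d)"
    and Z: "\<And>d. vanishes_below (int d) (Z d)"
    and identity: "\<And>d. X d * (Y d + (\<Sum>e<d. Y e)) = Z d"
  shows "suminf X * suminf Y = suminf Z + (\<Sum>d. Y d * (\<Sum>e<d. X e))"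
proof (rule fls_eq_if_vanishes_below)
  define W where "W = (\<lambda>d. Y d * (\<Sum>e<d. X e))"
  have W: "vanishes_below (int d) (W d)" for d
  proof -
    have "vanishes_below 0 (\<Sum>e<d. X e)"
      by (intro vanishes_below_sum vanishes_below_mono[OF X]) simp
    then show ?thesis
      using vanishes_below_mult[OF Y] by (fastforce simp: W_def)
  qed
  fix N
  have "suminf X * suminf Y - (suminf Z + suminf W)
      = (suminf X * suminf Y - (\<Sum>d<N. X d) * (\<Sum>d<N. Y d))
        - (suminf Z - (\<Sum>d<N. Z d)) - (suminf W - (\<Sum>d<N. W d))"
    using sum_mult_sum_lessThan_eq[of X Y Z N, OF identity] by (simp add: W_def algebra_simps)
  also have "vanishes_below (int N) \<dots>"
    using vanishes_below_suminf_mult_fls[OF X Y] vanishes_below_suminf_fls(2)[OF Z]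
      vanishes_below_suminf_fls(2)[OF W]
    by (meson vanishes_below_diff)
  finally show "vanishes_below (int N) (suminf X * suminf Y - (suminf Z + (\<Sum>d. Y d * (\<Sum>e<d. X e))))"
    by (simp add: W_def)
qed

theorem mainTheorem7:
  fixes k :: nat
  assumes "CARD('a) > 2"
    and "k \<ge> 1"
  shows "(zetaC (CARD('a) ^ k) :: 'a::{finite,field} fls) * zetaC (CARD('a) ^ k - 1)
           = zetaC (2 * CARD('a) ^ k - 1) + zetaC2 (CARD('a) ^ k - 1) (CARD('a) ^ k)"
proof -
  have "CARD('a) ^ k \<ge> 2"
    using assms self_le_power[of "CARD('a)" k] by simp
  then have "vanishes_below (int d) (monic_power_sum n d :: 'a fls)"
    if "n \<in> {CARD('a) ^ k, CARD('a) ^ k - 1, 2 * CARD('a) ^ k - 1}" for n d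
    using that by (auto intro: vanishes_below_monic_power_sum)
  then show ?thesis
    unfolding zetaC_eq_suminf zetaC2_eq_suminf
    by (intro suminf_mult_suminf_fls_eq monic_power_sum_mult_eq assms) auto
qed

end
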